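(* For every integer $n\ge3$, $$\gamma_{tr3}(P_3\square P_n)=\begin{cases}\left\lceil\frac{8n}{3}\right\rceil+1, & n\equiv0\pmod 3,\\[1mm] \left\lceil\frac{8n}{3}\right\rceil, & n\equiv1,2\pmod 3.\end{cases}$$
   Context: $P_m$ denotes the directed path with vertex set $\{0,1,\dots,m-1\}$ and arcs $(i,i+1)$ for $0\le i\le m-2$. The Cartesian product $D_1\square D_2$ has vertex set $V(D_1)\times V(D_2)$, with an arc from $(x_1,y_1)$ to $(x_2,y_2)$ iff either $(x_1,x_2)$ is an arc of $D_1$ and $y_1=y_2$, or $x_1=x_2$ and $(y_1,y_2)$ is an arc of $D_2$. For a digraph $D$ and positive integer $k$, a $k$-rainbow dominating function on $D$ is $f:V(D)\to\mathcal P(\{1,\dots,k\})$ such that every $v$ with $f(v)=\emptyset$ satisfies $\bigcup_{u\in N^-(v)}f(u)=\{1,\dots,k\}$, where $N^-(v)$ is the set of in-neighbors of $v$; its weight is $\sum_v|f(v)|$. It is total if additionally the subdigraph induced by $\{v:f(v)\ne\emptyset\}$ has no isolated vertex (a vertex with neither in- nor out-neighbors in it). $\gamma_{trk}(D)$ is the minimum weight of a total $k$-rainbow dominating function. *)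

theory Defs
  imports Complex_Main
begin

definition in_nbrs :: "('v \<times> 'v) set \<Rightarrow> 'v \<Rightarrow> 'v set" where
  "in_nbrs A v = {u. (u, v) \<in> A}"

definition path_verts :: "nat \<Rightarrow> nat set" where
  "path_verts m = {0..<m}"

definition path_arcs :: "nat \<Rightarrow> (nat \<times> nat) set" where
  "path_arcs m = {(i, i + 1) | i. i + 1 < m}"

definition cart_verts :: "'a set \<Rightarrow> 'b set \<Rightarrow> ('a \<times> 'b) set" where
  "cart_verts V1 V2 = V1 \<times> V2"

definition cart_arcs :: "'a set \<Rightarrow> ('a \<times> 'a) set \<Rightarrow> 'b set \<Rightarrow> ('b \<times> 'b) set
    \<Rightarrow> (('a \<times> 'b) \<times> ('a \<times> 'b)) set" where
  "cart_arcs V1 A1 V2 A2 =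
     {((x1, y1), (x2, y2)) | x1 y1 x2 y2.
        (x1, y1) \<in> V1 \<times> V2 \<and> (x2, y2) \<in> V1 \<times> V2 \<and>
        (((x1, x2) \<in> A1 \<and> y1 = y2) \<or> (x1 = x2 \<and> (y1, y2) \<in> A2))}"

text \<open>k-rainbow dominating function (values outside V are irrelevant and fixed to {}).\<close>
definition rainbow_dom :: "'v set \<Rightarrow> ('v \<times> 'v) set \<Rightarrow> nat \<Rightarrow> ('v \<Rightarrow> nat set) \<Rightarrow> bool" where
  "rainbow_dom V A k f \<longleftrightarrow>
     (\<forall>v. v \<notin> V \<longrightarrow> f v = {}) \<and>
     (\<forall>v\<in>V. f v \<subseteq> {1..k}) \<and>
     (\<forall>v\<in>V. f v = {} \<longrightarrow> (\<Union>u\<in>in_nbrs A v \<inter> V. f u) = {1..k})"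

text \<open>Total: the subdigraph induced by the vertices with nonempty label has no isolated vertex.\<close>
definition total_rainbow_dom :: "'v set \<Rightarrow> ('v \<times> 'v) set \<Rightarrow> nat \<Rightarrow> ('v \<Rightarrow> nat set) \<Rightarrow> bool" where
  "total_rainbow_dom V A k f \<longleftrightarrow>
     rainbow_dom V A k f \<and>
     (\<forall>v\<in>V. f v \<noteq> {} \<longrightarrow>
        (\<exists>u\<in>V. u \<noteq> v \<and> f u \<noteq> {} \<and> ((u, v) \<in> A \<or> (v, u) \<in> A)))"

definition rd_weight :: "'v set \<Rightarrow> ('v \<Rightarrow> nat set) \<Rightarrow> nat" where
  "rd_weight V f = (\<Sum>v\<in>V. card (f v))"

definition gamma_trk :: "'v set \<Rightarrow> ('v \<times> 'v) set \<Rightarrow> nat \<Rightarrow> nat" where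
  "gamma_trk V A k = Min {rd_weight V f | f. total_rainbow_dom V A k f}"

end

theory Submission
  imports Defs
begin

text \<open>
  Upper bound: repeat the columns \<open>({1}, {1}, {1})\<close>, \<open>({1}, {2,3}, {})\<close>, \<open>({1}, {}, {1})\<close>
  of weights 3, 3, 2 along the grid; if \<open>n mod 3 \<noteq> 1\<close>, end instead with the two columns
  \<open>({1,2,3}, {}, {1})\<close> and \<open>({}, {1}, {1})\<close>. Its weight is \<open>(8n + 3) div 3\<close>, which is the
  claimed value.

  Lower bound: only the sizes of the labels matter, and both conditions are local, so a total
  3-rainbow dominating function can be read column by column as a walk through finitely many
  states: the label sizes of the current column, together with the nonzero cells of it that
  already have a nonzero neighbour. An explicit potential on these states, checked by
  evaluation, is at most \<open>3w - 8\<close> after a first column of weight \<open>w\<close>, grows by at most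
  \<open>3w - 8\<close> with every further column of weight \<open>w\<close>, and is at least 1 wherever the walk
  may stop. Hence \<open>3 \<cdot> weight \<ge> 8n + 1\<close>.
\<close>

section \<open>Total rainbow domination on the grid\<close>

abbreviation grid_verts :: "nat \<Rightarrow> nat \<Rightarrow> (nat \<times> nat) set" where
  "grid_verts m n \<equiv> cart_verts (path_verts m) (path_verts n)"

abbreviation grid_arcs :: "nat \<Rightarrow> nat \<Rightarrow> ((nat \<times> nat) \<times> (nat \<times> nat)) set" where
  "grid_arcs m n \<equiv> cart_arcs (path_verts m) (path_arcs m) (path_verts n) (path_arcs n)"

lemma grid_verts_eq: "grid_verts m n = {0..<m} \<times> {0..<n}"
  by (simp add: cart_verts_def path_verts_def)

lemma grid_arc_iff:
  "((a, b), (c, d)) \<in> grid_arcs m n \<longleftrightarrow>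
     a < m \<and> b < n \<and> c < m \<and> d < n \<and> (c = a + 1 \<and> d = b \<or> c = a \<and> d = b + 1)"
  by (auto simp: cart_arcs_def path_verts_def path_arcs_def)

lemma grid_in_nbrs:
  assumes "x < m" "y < n"
  shows "in_nbrs (grid_arcs m n) (x, y) \<inter> grid_verts m n =
           (if 0 < x then {(x - 1, y)} else {}) \<union> (if 0 < y then {(x, y - 1)} else {})"
  using assms by (auto simp: in_nbrs_def grid_verts_eq grid_arc_iff)

lemma grid_adjacent_nonempty_iff:
  assumes "x < m" "y < n"
  shows "(\<exists>u\<in>grid_verts m n. u \<noteq> (x, y) \<and> f u \<noteq> {} \<and>
            ((u, (x, y)) \<in> grid_arcs m n \<or> ((x, y), u) \<in> grid_arcs m n)) \<longleftrightarrow>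
         (0 < x \<and> f (x - 1, y) \<noteq> {}) \<or> (x + 1 < m \<and> f (x + 1, y) \<noteq> {}) \<or>
         (0 < y \<and> f (x, y - 1) \<noteq> {}) \<or> (y + 1 < n \<and> f (x, y + 1) \<noteq> {})"
    (is "?adjacent \<longleftrightarrow> ?local")
proof
  assume ?adjacent
  then obtain a b where "f (a, b) \<noteq> {}"
      "((a, b), (x, y)) \<in> grid_arcs m n \<or> ((x, y), (a, b)) \<in> grid_arcs m n"
    by auto
  then show ?local
    unfolding grid_arc_iff by auto
next
  assume ?local
  then show ?adjacent
  proof (elim disjE conjE)
    assume "0 < x" "f (x - 1, y) \<noteq> {}"
    then show ?adjacent
      using assms by (intro bexI[of _ "(x - 1, y)"]) (auto simp: grid_verts_eq grid_arc_iff)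
  next
    assume "x + 1 < m" "f (x + 1, y) \<noteq> {}"
    then show ?adjacent
      using assms by (intro bexI[of _ "(x + 1, y)"]) (auto simp: grid_verts_eq grid_arc_iff)
  next
    assume "0 < y" "f (x, y - 1) \<noteq> {}"
    then show ?adjacent
      using assms by (intro bexI[of _ "(x, y - 1)"]) (auto simp: grid_verts_eq grid_arc_iff)
  next
    assume "y + 1 < n" "f (x, y + 1) \<noteq> {}"
    then show ?adjacent
      using assms by (intro bexI[of _ "(x, y + 1)"]) (auto simp: grid_verts_eq grid_arc_iff)
  qed
qed

lemma total_rainbow_dom_grid_iff:
  "total_rainbow_dom (grid_verts m n) (grid_arcs m n) k f \<longleftrightarrow>
     (\<forall>v. v \<notin> grid_verts m n \<longrightarrow> f v = {}) \<and>
     (\<forall>x<m. \<forall>y<n. f (x, y) \<subseteq> {1..k} \<and>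
        (f (x, y) = {} \<longrightarrow>
           (if 0 < x then f (x - 1, y) else {}) \<union> (if 0 < y then f (x, y - 1) else {}) = {1..k}) \<and>
        (f (x, y) \<noteq> {} \<longrightarrow>
           (0 < x \<and> f (x - 1, y) \<noteq> {}) \<or> (x + 1 < m \<and> f (x + 1, y) \<noteq> {}) \<or>
           (0 < y \<and> f (x, y - 1) \<noteq> {}) \<or> (y + 1 < n \<and> f (x, y + 1) \<noteq> {})))"
proof -
  have in_union: "(\<Union>u\<in>in_nbrs (grid_arcs m n) (x, y) \<inter> grid_verts m n. f u) =
      (if 0 < x then f (x - 1, y) else {}) \<union> (if 0 < y then f (x, y - 1) else {})"
    if "x < m" "y < n" for x y
    unfolding grid_in_nbrs[OF that] by auto
  have ball: "(\<forall>v\<in>grid_verts m n. Q v) \<longleftrightarrow> (\<forall>x<m. \<forall>y<n. Q (x, y))" for Q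
    by (auto simp: grid_verts_eq)
  show ?thesis
    unfolding total_rainbow_dom_def rainbow_dom_def ball
    by (simp add: in_union grid_adjacent_nonempty_iff all_conj_distrib imp_conjR split del: if_split)
qed

lemma rd_weight_grid: "rd_weight (grid_verts m n) f = (\<Sum>y<n. \<Sum>x<m. card (f (x, y)))"
proof -
  have "rd_weight (grid_verts m n) f = (\<Sum>(x, y)\<in>{..<m} \<times> {..<n}. card (f (x, y)))"
    by (simp add: rd_weight_def grid_verts_eq atLeast0LessThan case_prod_beta')
  also have "\<dots> = (\<Sum>x<m. \<Sum>y<n. card (f (x, y)))"
    by (rule sum.cartesian_product[symmetric])
  also have "\<dots> = (\<Sum>y<n. \<Sum>x<m. card (f (x, y)))"
    by (rule sum.swap)
  finally show ?thesis .
qed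

lemma rd_weight_le:
  assumes "rainbow_dom V A k f"
  shows "rd_weight V f \<le> k * card V"
proof -
  have "card (f v) \<le> k" if "v \<in> V" for v
    using card_mono[of "{1..k}" "f v"] assms that by (simp add: rainbow_dom_def)
  then show ?thesis
    unfolding rd_weight_def using sum_bounded_above[of V "\<lambda>v. card (f v)" k] by (simp add: mult.commute)
qed

lemma gamma_trk_eqI:
  assumes f: "total_rainbow_dom V A k f" "rd_weight V f = w"
    and minimal: "\<And>g. total_rainbow_dom V A k g \<Longrightarrow> w \<le> rd_weight V g"
  shows "gamma_trk V A k = w"
proof -
  let ?S = "{rd_weight V g | g. total_rainbow_dom V A k g}"
  have "?S \<subseteq> {..k * card V}"
    using rd_weight_le unfolding total_rainbow_dom_def by blast
  then have "finite ?S"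
    using finite_subset by blast
  moreover have "w \<in> ?S"
    using f by blast
  ultimately show ?thesis
    unfolding gamma_trk_def using minimal by (intro Min_eqI) auto
qed

section \<open>The lower bound\<close>

text \<open>
  A column is abstracted to the sizes of its three labels, top to bottom. Flag \<open>i\<close> of a
  \<open>support\<close> says that the nonzero cell \<open>i\<close> already has a nonzero neighbour in its own or in
  the previous column; an unsupported nonzero cell must be supported by the next column.
\<close>

type_synonym column = "nat \<times> nat \<times> nat"
type_synonym support = "bool \<times> bool \<times> bool"

fun column_weight :: "column \<Rightarrow> nat" where
  "column_weight (c0, c1, c2) = c0 + c1 + c2"

fun dominated :: "column \<Rightarrow> column \<Rightarrow> bool" where
  "dominated (p0, p1, p2) (c0, c1, c2) \<longleftrightarrow>
     (c0 = 0 \<longrightarrow> 3 \<le> p0) \<and> (c1 = 0 \<longrightarrow> 3 \<le> c0 + p1) \<and> (c2 = 0 \<longrightarrow> 3 \<le> c1 + p2)"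

fun supported :: "column \<Rightarrow> column \<Rightarrow> support" where
  "supported (p0, p1, p2) (c0, c1, c2) =
     (c0 \<noteq> 0 \<and> (c1 \<noteq> 0 \<or> p0 \<noteq> 0),
      c1 \<noteq> 0 \<and> (c0 \<noteq> 0 \<or> c2 \<noteq> 0 \<or> p1 \<noteq> 0),
      c2 \<noteq> 0 \<and> (c1 \<noteq> 0 \<or> p2 \<noteq> 0))"

fun pending_covered :: "column \<Rightarrow> support \<Rightarrow> column \<Rightarrow> bool" where
  "pending_covered (p0, p1, p2) (s0, s1, s2) (c0, c1, c2) \<longleftrightarrow>
     (p0 \<noteq> 0 \<and> \<not> s0 \<longrightarrow> c0 \<noteq> 0) \<and> (p1 \<noteq> 0 \<and> \<not> s1 \<longrightarrow> c1 \<noteq> 0) \<and>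
     (p2 \<noteq> 0 \<and> \<not> s2 \<longrightarrow> c2 \<noteq> 0)"

fun fully_supported :: "column \<Rightarrow> support \<Rightarrow> bool" where
  "fully_supported (c0, c1, c2) (s0, s1, s2) \<longleftrightarrow>
     (c0 \<noteq> 0 \<longrightarrow> s0) \<and> (c1 \<noteq> 0 \<longrightarrow> s1) \<and> (c2 \<noteq> 0 \<longrightarrow> s2)"

definition columns :: "column list" where
  "columns = [(c0, c1, c2). c0 \<leftarrow> [0..<4], c1 \<leftarrow> [0..<4], c2 \<leftarrow> [0..<4]]"

lemma mem_columns: "(c0, c1, c2) \<in> set columns \<longleftrightarrow> c0 < 4 \<and> c1 < 4 \<and> c2 < 4"
  unfolding columns_def by (auto intro!: bexI image_eqI)

text \<open>
  The entry for column \<open>c\<close> and flags \<open>s\<close> is the least value of \<open>3 \<cdot> weight - 8 \<cdot> length\<close>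
  over all admissible column sequences ending in state \<open>(c, s)\<close>, found by dynamic programming;
  states without an entry cannot occur. The proof only uses the inequalities checked below.
\<close>

definition potential_table :: "(column \<times> (support \<times> int) list) list" where
  "potential_table = [
    ((0,0,0), [((False,False,False), 11)]),
    ((0,0,1), [((False,False,False), 5), ((False,False,True), 8)]),
    ((0,0,2), [((False,False,False), 8), ((False,False,True), 11)]),
    ((0,0,3), [((False,False,False), 11), ((False,False,True), 14)]),
    ((0,1,0), [((False,False,False), 2), ((False,True,False), 5)]),
    ((0,1,1), [((False,True,True), 2)]),
    ((0,1,2), [((False,True,True), 5)]),
    ((0,1,3), [((False,True,True), 8)]),
    ((0,2,0), [((False,False,False), 2), ((False,True,False), 5)]),
    ((0,2,1), [((False,True,True), 5)]),
    ((0,2,2), [((False,True,True), 8)]),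
    ((0,2,3), [((False,True,True), 11)]),
    ((0,3,0), [((False,False,False), 5), ((False,True,False), 8)]),
    ((0,3,1), [((False,True,True), 8)]),
    ((0,3,2), [((False,True,True), 11)]),
    ((0,3,3), [((False,True,True), 14)]),
    ((1,0,0), [((False,False,False), 6), ((True,False,False), 5)]),
    ((1,0,1), [((False,False,False), 3), ((False,False,True), 3), ((True,False,False), 0), ((True,False,True), 2)]),
    ((1,0,2), [((False,False,False), 6), ((False,False,True), 6), ((True,False,False), 3), ((True,False,True), 5)]),
    ((1,0,3), [((False,False,False), 9), ((False,False,True), 9), ((True,False,False), 6), ((True,False,True), 8)]),
    ((1,1,0), [((True,True,False), 2)]),
    ((1,1,1), [((True,True,True), 1)]),
    ((1,1,2), [((True,True,True), 4)]),
    ((1,1,3), [((True,True,True), 7)]),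
    ((1,2,0), [((True,True,False), 2)]),
    ((1,2,1), [((True,True,True), 4)]),
    ((1,2,2), [((True,True,True), 7)]),
    ((1,2,3), [((True,True,True), 10)]),
    ((1,3,0), [((True,True,False), 4)]),
    ((1,3,1), [((True,True,True), 7)]),
    ((1,3,2), [((True,True,True), 10)]),
    ((1,3,3), [((True,True,True), 13)]),
    ((2,0,0), [((False,False,False), 6), ((True,False,False), 5)]),
    ((2,0,1), [((False,False,False), 6), ((False,False,True), 3), ((True,False,False), 3), ((True,False,True), 2)]),
    ((2,0,2), [((False,False,False), 9), ((False,False,True), 6), ((True,False,False), 6), ((True,False,True), 5)]),
    ((2,0,3), [((False,False,False), 12), ((False,False,True), 9), ((True,False,False), 9), ((True,False,True), 8)]),
    ((2,1,0), [((True,True,False), 5)]),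
    ((2,1,1), [((True,True,True), 4)]),
    ((2,1,2), [((True,True,True), 7)]),
    ((2,1,3), [((True,True,True), 10)]),
    ((2,2,0), [((True,True,False), 5)]),
    ((2,2,1), [((True,True,True), 7)]),
    ((2,2,2), [((True,True,True), 10)]),
    ((2,2,3), [((True,True,True), 13)]),
    ((2,3,0), [((True,True,False), 7)]),
    ((2,3,1), [((True,True,True), 10)]),
    ((2,3,2), [((True,True,True), 13)]),
    ((2,3,3), [((True,True,True), 16)]),
    ((3,0,0), [((False,False,False), 9), ((True,False,False), 8)]),
    ((3,0,1), [((False,False,False), 4), ((False,False,True), 6), ((True,False,False), 6), ((True,False,True), 4)]),
    ((3,0,2), [((False,False,False), 7), ((False,False,True), 9), ((True,False,False), 9), ((True,False,True), 7)]),
    ((3,0,3), [((False,False,False), 10), ((False,False,True), 12), ((True,False,False), 12), ((True,False,True), 10)]),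
    ((3,1,0), [((True,True,False), 8)]),
    ((3,1,1), [((True,True,True), 7)]),
    ((3,1,2), [((True,True,True), 10)]),
    ((3,1,3), [((True,True,True), 13)]),
    ((3,2,0), [((True,True,False), 8)]),
    ((3,2,1), [((True,True,True), 10)]),
    ((3,2,2), [((True,True,True), 13)]),
    ((3,2,3), [((True,True,True), 16)]),
    ((3,3,0), [((True,True,False), 10)]),
    ((3,3,1), [((True,True,True), 13)]),
    ((3,3,2), [((True,True,True), 16)]),
    ((3,3,3), [((True,True,True), 19)])
  ]"

definition potential :: "column \<Rightarrow> support \<Rightarrow> int \<Rightarrow> bool" where
  "potential c s v \<longleftrightarrow> (\<exists>ps. (c, ps) \<in> set potential_table \<and> (s, v) \<in> set ps)"

definition potential_table_complete :: bool where
  "potential_table_complete \<longleftrightarrow> list_all (\<lambda>c. c \<in> fst ` set potential_table) columns"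

definition potential_table_initial :: bool where
  "potential_table_initial \<longleftrightarrow> list_all (\<lambda>(c, ps). dominated (0, 0, 0) c \<longrightarrow>
     list_ex (\<lambda>(s, v). s = supported (0, 0, 0) c \<and> v \<le> 3 * int (column_weight c) - 8) ps) potential_table"

definition potential_table_step :: bool where
  "potential_table_step \<longleftrightarrow> list_all (\<lambda>(p, ps). list_all (\<lambda>(s, v). list_all (\<lambda>(c, cs).
     dominated p c \<and> pending_covered p s c \<longrightarrow>
     list_ex (\<lambda>(s', v'). s' = supported p c \<and> v' \<le> v + 3 * int (column_weight c) - 8) cs)
     potential_table) ps) potential_table"

definition potential_table_final :: bool where
  "potential_table_final \<longleftrightarrow>
     list_all (\<lambda>(c, ps). list_all (\<lambda>(s, v). fully_supported c s \<longrightarrow> 1 \<le> v) ps) potential_table"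

lemma potential_table_complete: potential_table_complete
  by code_simp

lemma potential_table_initial: potential_table_initial
  by code_simp

lemma potential_table_step: potential_table_step
  by code_simp

lemma potential_table_final: potential_table_final
  by code_simp

lemma potential_initial:
  assumes "c \<in> set columns" "dominated (0, 0, 0) c"
  shows "\<exists>v. potential c (supported (0, 0, 0) c) v \<and> v \<le> 3 * int (column_weight c) - 8"
proof -
  obtain ps where entry: "(c, ps) \<in> set potential_table"
    using potential_table_complete assms(1) unfolding potential_table_complete_def list_all_iff by auto
  note initial = potential_table_initial[unfolded potential_table_initial_def list_all_iff list_ex_iff]
  obtain v where "(supported (0, 0, 0) c, v) \<in> set ps" "v \<le> 3 * int (column_weight c) - 8"
    using bspec[OF initial entry] assms(2) by auto
  then show ?thesis
    using entry unfolding potential_def by blast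
qed

lemma potential_step:
  assumes "potential p s v" "c \<in> set columns" "dominated p c" "pending_covered p s c"
  shows "\<exists>v'. potential c (supported p c) v' \<and> v' \<le> v + 3 * int (column_weight c) - 8"
proof -
  obtain ps where p_entry: "(p, ps) \<in> set potential_table" "(s, v) \<in> set ps"
    using assms(1) unfolding potential_def by auto
  obtain cs where c_entry: "(c, cs) \<in> set potential_table"
    using potential_table_complete assms(2) unfolding potential_table_complete_def list_all_iff by auto
  note step = potential_table_step[unfolded potential_table_step_def list_all_iff list_ex_iff]
  obtain v' where "(supported p c, v') \<in> set cs" "v' \<le> v + 3 * int (column_weight c) - 8"
    using bspec[OF bspec[OF bspec[OF step p_entry(1), simplified] p_entry(2), simplified] c_entry]
      assms(3,4) by auto
  then show ?thesis
    using c_entry unfolding potential_def by blast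
qed

lemma potential_final:
  assumes "potential c s v" "fully_supported c s"
  shows "1 \<le> v"
proof -
  obtain ps where entry: "(c, ps) \<in> set potential_table" "(s, v) \<in> set ps"
    using assms(1) unfolding potential_def by auto
  note final = potential_table_final[unfolded potential_table_final_def list_all_iff]
  show ?thesis
    using bspec[OF bspec[OF final entry(1), simplified] entry(2)] assms(2) by simp
qed

definition prev_column :: "(nat \<Rightarrow> column) \<Rightarrow> nat \<Rightarrow> column" where
  "prev_column col y = (if y = 0 then (0, 0, 0) else col (y - 1))"

lemma admissible_columns_weight_bound:
  fixes col :: "nat \<Rightarrow> column"
  assumes "n \<ge> 1"
    and col_mem: "\<And>y. y < n \<Longrightarrow> col y \<in> set columns"
    and dom: "\<And>y. y < n \<Longrightarrow> dominated (prev_column col y) (col y)"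
    and covered: "\<And>y. y + 1 < n \<Longrightarrow>
           pending_covered (col y) (supported (prev_column col y) (col y)) (col (y + 1))"
    and final: "fully_supported (col (n - 1)) (supported (prev_column col (n - 1)) (col (n - 1)))"
  shows "8 * n + 1 \<le> 3 * (\<Sum>y<n. column_weight (col y))"
proof -
  define sup where "sup y = supported (prev_column col y) (col y)" for y
  have invariant: "\<exists>v. potential (col y) (sup y) v \<and>
      v + 8 * (int y + 1) \<le> 3 * int (\<Sum>j<Suc y. column_weight (col j))" if "y < n" for y
    using that
  proof (induction y)
    case 0
    have "dominated (0, 0, 0) (col 0)"
      using dom[OF 0] by (simp add: prev_column_def)
    then show ?case
      using potential_initial[OF col_mem[OF 0]] by (auto simp: sup_def prev_column_def)
  next
    case (Suc y)
    then obtain v where v: "potential (col y) (sup y) v"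
        "v + 8 * (int y + 1) \<le> 3 * int (\<Sum>j<Suc y. column_weight (col j))"
      by auto
    have "dominated (col y) (col (Suc y))"
      using dom[OF Suc.prems] by (simp add: prev_column_def)
    then obtain v' where v': "potential (col (Suc y)) (sup (Suc y)) v'"
        "v' \<le> v + 3 * int (column_weight (col (Suc y))) - 8"
      using potential_step[OF v(1) col_mem[OF Suc.prems]] covered[of y] Suc.prems
      by (auto simp: sup_def prev_column_def)
    then show ?case
      using v(2) by (intro exI[of _ v']) simp
  qed
  obtain v where "potential (col (n - 1)) (sup (n - 1)) v"
      and v: "v + 8 * (int (n - 1) + 1) \<le> 3 * int (\<Sum>y<n. column_weight (col y))"
    using invariant[of "n - 1"] \<open>n \<ge> 1\<close> by auto
  then have "1 \<le> v"
    using potential_final final by (simp add: sup_def)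
  with v \<open>n \<ge> 1\<close> have "int (8 * n + 1) \<le> int (3 * (\<Sum>y<n. column_weight (col y)))"
    by (simp add: of_nat_diff)
  then show ?thesis
    by (simp only: of_nat_le_iff)
qed

lemma weighted_grid_lower_bound:
  fixes w :: "nat \<Rightarrow> nat \<Rightarrow> nat"
  assumes "n \<ge> 1"
    and bounded: "\<And>x y. x < 3 \<Longrightarrow> y < n \<Longrightarrow> w x y \<le> 3"
    and dominating: "\<And>x y. x < 3 \<Longrightarrow> y < n \<Longrightarrow> w x y = 0 \<Longrightarrow>
           3 \<le> (if 0 < x then w (x - 1) y else 0) + (if 0 < y then w x (y - 1) else 0)"
    and total: "\<And>x y. x < 3 \<Longrightarrow> y < n \<Longrightarrow> w x y \<noteq> 0 \<Longrightarrow>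
           (0 < x \<and> w (x - 1) y \<noteq> 0) \<or> (x + 1 < 3 \<and> w (x + 1) y \<noteq> 0) \<or>
           (0 < y \<and> w x (y - 1) \<noteq> 0) \<or> (y + 1 < n \<and> w x (y + 1) \<noteq> 0)"
  shows "8 * n + 1 \<le> 3 * (\<Sum>y<n. w 0 y + w 1 y + w 2 y)"
proof -
  define col where "col y = (w 0 y, w 1 y, w 2 y)" for y
  have total_at: "(w 0 y \<noteq> 0 \<longrightarrow>
        w 1 y \<noteq> 0 \<or> (0 < y \<and> w 0 (y - 1) \<noteq> 0) \<or> (y + 1 < n \<and> w 0 (y + 1) \<noteq> 0)) \<and>
      (w 1 y \<noteq> 0 \<longrightarrow> w 0 y \<noteq> 0 \<or> w 2 y \<noteq> 0 \<or>
        (0 < y \<and> w 1 (y - 1) \<noteq> 0) \<or> (y + 1 < n \<and> w 1 (y + 1) \<noteq> 0)) \<and>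
      (w 2 y \<noteq> 0 \<longrightarrow>
        w 1 y \<noteq> 0 \<or> (0 < y \<and> w 2 (y - 1) \<noteq> 0) \<or> (y + 1 < n \<and> w 2 (y + 1) \<noteq> 0))"
    if "y < n" for y
    using total[of 0 y] total[of 1 y] total[of 2 y] that by (auto simp: numeral_2_eq_2)
  have "8 * n + 1 \<le> 3 * (\<Sum>y<n. column_weight (col y))"
  proof (rule admissible_columns_weight_bound[OF \<open>n \<ge> 1\<close>])
    show "col y \<in> set columns" if "y < n" for y
      using bounded[of 0 y] bounded[of 1 y] bounded[of 2 y] that by (simp add: col_def mem_columns)
    show "dominated (prev_column col y) (col y)" if "y < n" for y
      using dominating[of 0 y] dominating[of 1 y] dominating[of 2 y] that
      by (auto simp: prev_column_def col_def intro: gr0I)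
    show "pending_covered (col y) (supported (prev_column col y) (col y)) (col (y + 1))"
      if "y + 1 < n" for y
      using total_at[of y] that by (auto simp: prev_column_def col_def)
    show "fully_supported (col (n - 1)) (supported (prev_column col (n - 1)) (col (n - 1)))"
      using total_at[of "n - 1"] \<open>n \<ge> 1\<close> by (auto simp: prev_column_def col_def)
  qed
  then show ?thesis
    by (simp add: col_def)
qed

lemma rd_weight_grid_lower_bound:
  assumes "n \<ge> 1" and f: "total_rainbow_dom (grid_verts 3 n) (grid_arcs 3 n) 3 f"
  shows "8 * n + 1 \<le> 3 * rd_weight (grid_verts 3 n) f"
proof -
  define w where "w x y = card (f (x, y))" for x y
  note grid_conditions = f[unfolded total_rainbow_dom_grid_iff]
  note local = conjunct2[OF grid_conditions, rule_format]
  have subset: "f (x, y) \<subseteq> {1..3}" if "x < 3" "y < n" for x y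
    using local[OF that] by blast
  have "finite (f (x, y))" for x y
  proof (cases "x < 3 \<and> y < n")
    case True
    then show ?thesis
      using subset finite_subset by blast
  next
    case False
    then have "(x, y) \<notin> grid_verts 3 n"
      by (simp add: grid_verts_eq)
    then show ?thesis
      using conjunct1[OF grid_conditions] by simp
  qed
  then have w_zero [simp]: "w x y = 0 \<longleftrightarrow> f (x, y) = {}" for x y
    by (simp add: w_def)
  have bounded: "w x y \<le> 3" if "x < 3" "y < n" for x y
  proof -
    have "card (f (x, y)) \<le> card {1..3::nat}"
      using subset[OF that] by (rule card_mono[rotated]) simp
    then show ?thesis
      by (simp add: w_def)
  qed
  have dominating: "3 \<le> (if 0 < x then w (x - 1) y else 0) + (if 0 < y then w x (y - 1) else 0)"
    if "x < 3" "y < n" "w x y = 0" for x y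
  proof -
    let ?A = "if 0 < x then f (x - 1, y) else {}" and ?B = "if 0 < y then f (x, y - 1) else {}"
    have "?A \<union> ?B = {1..3}"
      using local[OF that(1,2)] that(3) by simp
    then have "3 = card (?A \<union> ?B)"
      by simp
    also have "\<dots> \<le> card ?A + card ?B"
      by (rule card_Un_le)
    also have "\<dots> = (if 0 < x then w (x - 1) y else 0) + (if 0 < y then w x (y - 1) else 0)"
      by (simp add: w_def)
    finally show ?thesis .
  qed
  have total: "(0 < x \<and> w (x - 1) y \<noteq> 0) \<or> (x + 1 < 3 \<and> w (x + 1) y \<noteq> 0) \<or>
      (0 < y \<and> w x (y - 1) \<noteq> 0) \<or> (y + 1 < n \<and> w x (y + 1) \<noteq> 0)"
    if "x < 3" "y < n" "w x y \<noteq> 0" for x y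
    using local[OF that(1,2)] that(3) by simp
  have "rd_weight (grid_verts 3 n) f = (\<Sum>y<n. w 0 y + w 1 y + w 2 y)"
    by (simp add: rd_weight_grid w_def eval_nat_numeral add.assoc)
  then show ?thesis
    using weighted_grid_lower_bound[OF assms(1) bounded dominating total] by simp
qed

section \<open>The construction\<close>

datatype column_kind = Ones | Split | Gap | Heavy | Last

fun cells :: "column_kind \<Rightarrow> nat set list" where
  "cells Ones = [{1}, {1}, {1}]"
| "cells Split = [{1}, {2, 3}, {}]"
| "cells Gap = [{1}, {}, {1}]"
| "cells Heavy = [{1, 2, 3}, {}, {1}]"
| "cells Last = [{}, {1}, {1}]"

fun follows :: "column_kind \<Rightarrow> column_kind \<Rightarrow> bool" where
  "follows Ones k \<longleftrightarrow> k = Split \<or> k = Heavy"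
| "follows Split k \<longleftrightarrow> k = Gap"
| "follows Gap k \<longleftrightarrow> k = Ones \<or> k = Heavy"
| "follows Heavy k \<longleftrightarrow> k = Last"
| "follows Last k \<longleftrightarrow> False"

definition periodic_kind :: "nat \<Rightarrow> column_kind" where
  "periodic_kind y = [Ones, Split, Gap] ! (y mod 3)"

definition kind :: "nat \<Rightarrow> nat \<Rightarrow> column_kind" where
  "kind n y =
     (if n mod 3 \<noteq> 1 \<and> y = n - 2 then Heavy
      else if n mod 3 \<noteq> 1 \<and> y = n - 1 then Last
      else periodic_kind y)"

definition construction :: "nat \<Rightarrow> nat \<times> nat \<Rightarrow> nat set" where
  "construction n = (\<lambda>(x, y). if x < 3 \<and> y < n then cells (kind n y) ! x else {})"

lemma less_3_cases: "(x::nat) < 3 \<Longrightarrow> x = 0 \<or> x = 1 \<or> x = 2"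
  by arith

lemma cells_subset: "x < 3 \<Longrightarrow> cells k ! x \<subseteq> {1..3}"
  by (cases k) (auto dest!: less_3_cases)

lemma cells_Ones_supported:
  "x < 3 \<Longrightarrow> (0 < x \<and> cells Ones ! (x - 1) \<noteq> {}) \<or> (x + 1 < 3 \<and> cells Ones ! (x + 1) \<noteq> {})"
  by (auto dest!: less_3_cases)

lemma follows_dominates:
  "follows k k' \<Longrightarrow> x < 3 \<Longrightarrow> cells k' ! x = {} \<Longrightarrow>
     (if 0 < x then cells k' ! (x - 1) else {}) \<union> cells k ! x = {1..3}"
  by (cases k; cases k') (auto dest!: less_3_cases)

lemma follows_supported:
  "follows k k' \<Longrightarrow> x < 3 \<Longrightarrow> cells k' ! x \<noteq> {} \<Longrightarrow>
     (0 < x \<and> cells k' ! (x - 1) \<noteq> {}) \<or> (x + 1 < 3 \<and> cells k' ! (x + 1) \<noteq> {}) \<or>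
     cells k ! x \<noteq> {} \<or> (k' = Gap \<and> x = 2)"
  by (cases k; cases k') (auto dest!: less_3_cases)

lemma follows_Gap: "follows Gap k \<Longrightarrow> cells k ! 2 \<noteq> {}"
  by (cases k) auto

lemma kind_0: "n \<ge> 3 \<Longrightarrow> kind n 0 = Ones"
  by (auto simp: kind_def periodic_kind_def)

lemma kind_last: "n \<ge> 3 \<Longrightarrow> kind n (n - 1) = Ones \<or> kind n (n - 1) = Last"
proof (cases "n mod 3 = 1")
  case True
  then have "(n - 1) mod 3 = 0"
    by presburger
  then show ?thesis
    using True by (simp add: kind_def periodic_kind_def)
qed (auto simp: kind_def)

lemma periodic_kind_follows: "follows (periodic_kind y) (periodic_kind (y + 1))"
proof -
  have "y mod 3 = 0 \<and> (y + 1) mod 3 = 1 \<or> y mod 3 = 1 \<and> (y + 1) mod 3 = 2 \<or>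
        y mod 3 = 2 \<and> (y + 1) mod 3 = 0"
    by presburger
  then show ?thesis
    by (auto simp: periodic_kind_def)
qed

lemma kind_follows:
  assumes "n \<ge> 3" "y + 1 < n"
  shows "follows (kind n y) (kind n (y + 1))"
proof -
  consider "n mod 3 \<noteq> 1" "y + 1 = n - 1" | "n mod 3 \<noteq> 1" "y + 1 = n - 2"
    | "n mod 3 = 1 \<or> y + 2 < n - 1"
    using assms by arith
  then show ?thesis
  proof cases
    case 1
    then show ?thesis
      using assms by (auto simp: kind_def)
  next
    case 2
    then have "y mod 3 = 0 \<or> y mod 3 = 2"
      by presburger
    then show ?thesis
      using 2 assms by (auto simp: kind_def periodic_kind_def)
  next
    case 3
    then have "kind n y = periodic_kind y" "kind n (y + 1) = periodic_kind (y + 1)"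
      using assms by (auto simp: kind_def)
    then show ?thesis
      using periodic_kind_follows by simp
  qed
qed

lemma construction_cell: "x < 3 \<Longrightarrow> y < n \<Longrightarrow> construction n (x, y) = cells (kind n y) ! x"
  by (simp add: construction_def)

lemma construction_dominated:
  assumes n: "n \<ge> 3" and xy: "x < 3" "y < n" and empty: "construction n (x, y) = {}"
  shows "(if 0 < x then construction n (x - 1, y) else {}) \<union>
         (if 0 < y then construction n (x, y - 1) else {}) = {1..3}"
proof (cases "y = 0")
  case True
  then show ?thesis
    using empty xy kind_0[OF n] by (auto simp: construction_cell dest!: less_3_cases)
next
  case False
  have "follows (kind n (y - 1)) (kind n y)"
    using kind_follows[OF n, of "y - 1"] xy False by simp
  moreover have "cells (kind n y) ! x = {}"
    using empty xy by (simp add: construction_cell)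
  moreover have "(if 0 < x then construction n (x - 1, y) else {}) \<union>
      (if 0 < y then construction n (x, y - 1) else {}) =
      (if 0 < x then cells (kind n y) ! (x - 1) else {}) \<union> cells (kind n (y - 1)) ! x"
    using xy False by (simp add: construction_cell)
  ultimately show ?thesis
    using follows_dominates xy(1) by metis
qed

lemma construction_supported:
  assumes n: "n \<ge> 3" and xy: "x < 3" "y < n" and nonempty: "construction n (x, y) \<noteq> {}"
  shows "(0 < x \<and> construction n (x - 1, y) \<noteq> {}) \<or> (x + 1 < 3 \<and> construction n (x + 1, y) \<noteq> {}) \<or>
         (0 < y \<and> construction n (x, y - 1) \<noteq> {}) \<or> (y + 1 < n \<and> construction n (x, y + 1) \<noteq> {})"
proof (cases "y = 0")
  case True
  then show ?thesis
    using cells_Ones_supported[OF xy(1)] kind_0[OF n] xy by (auto simp: construction_cell)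
next
  case False
  then have "follows (kind n (y - 1)) (kind n y)"
    using kind_follows[OF n, of "y - 1"] xy by simp
  from follows_supported[OF this xy(1)] nonempty
  consider "(0 < x \<and> cells (kind n y) ! (x - 1) \<noteq> {}) \<or> (x + 1 < 3 \<and> cells (kind n y) ! (x + 1) \<noteq> {}) \<or>
      cells (kind n (y - 1)) ! x \<noteq> {}" | "kind n y = Gap" "x = 2"
    using xy by (auto simp: construction_cell)
  then show ?thesis
  proof cases
    case 1
    then show ?thesis
      using xy False by (auto simp: construction_cell)
  next
    case 2
    then have "y + 1 < n"
      using kind_last[OF n] xy by (cases "y = n - 1") auto
    then have "cells (kind n (y + 1)) ! 2 \<noteq> {}"
      using follows_Gap kind_follows[OF n] 2 by metis
    then show ?thesis
      using 2 \<open>y + 1 < n\<close> by (auto simp: construction_cell)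
  qed
qed

lemma construction_total_rainbow_dom:
  assumes "n \<ge> 3"
  shows "total_rainbow_dom (grid_verts 3 n) (grid_arcs 3 n) 3 (construction n)"
  unfolding total_rainbow_dom_grid_iff
proof (intro conjI allI impI)
  fix v
  assume "v \<notin> grid_verts 3 n"
  then show "construction n v = {}"
    by (auto simp: construction_def grid_verts_eq split: if_splits)
next
  fix x y :: nat
  assume "x < 3" "y < n"
  then show "construction n (x, y) \<subseteq> {1..3}"
    using cells_subset[of x "kind n y"] by (simp add: construction_cell)
qed (use assms construction_dominated construction_supported in blast)+

definition kind_weight :: "column_kind \<Rightarrow> nat" where
  "kind_weight k = (\<Sum>x<3. card (cells k ! x))"

lemma kind_weight_simps [simp]:
  "kind_weight Ones = 3" "kind_weight Split = 3" "kind_weight Gap = 2"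
  "kind_weight Heavy = 4" "kind_weight Last = 2"
  by (simp_all add: kind_weight_def eval_nat_numeral)

lemma periodic_weight_sum: "(\<Sum>y<m. kind_weight (periodic_kind y)) = (8 * m + 2) div 3"
proof (induction m)
  case (Suc m)
  have "m mod 3 = 0 \<or> m mod 3 = 1 \<or> m mod 3 = 2"
    by presburger
  then show ?case
    using Suc by (auto simp: periodic_kind_def) presburger+
qed simp

lemma rd_weight_construction:
  assumes n: "n \<ge> 3"
  shows "rd_weight (grid_verts 3 n) (construction n) = (8 * n + 3) div 3"
proof -
  have "rd_weight (grid_verts 3 n) (construction n) = (\<Sum>y<n. kind_weight (kind n y))"
    by (simp add: rd_weight_grid kind_weight_def construction_def)
  also have "\<dots> = (8 * n + 3) div 3"
  proof (cases "n mod 3 = 1")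
    case True
    then have "(\<Sum>y<n. kind_weight (kind n y)) = (\<Sum>y<n. kind_weight (periodic_kind y))"
      by (simp add: kind_def)
    then show ?thesis
      using True by (simp add: periodic_weight_sum) presburger
  next
    case False
    define m where "m = n - 2"
    have "n = Suc (Suc m)"
      using n by (simp add: m_def)
    moreover have "kind n y = periodic_kind y" if "y < m" for y
    proof -
      have "y \<noteq> n - 2" "y \<noteq> n - 1"
        using that by (auto simp: m_def)
      then show ?thesis
        by (simp add: kind_def)
    qed
    moreover have "kind n m = Heavy" "kind n (Suc m) = Last"
      using False n by (auto simp: kind_def m_def)
    ultimately have "(\<Sum>y<n. kind_weight (kind n y)) = (\<Sum>y<m. kind_weight (periodic_kind y)) + 6"
      by simp
    then show ?thesis
      using False \<open>n = Suc (Suc m)\<close> by (simp add: periodic_weight_sum) presburger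
  qed
  finally show ?thesis .
qed

lemma ceiling_eight_thirds: "\<lceil>8 * real n / 3\<rceil> = int ((8 * n + 2) div 3)"
proof -
  have "\<lceil>8 * real n / 3\<rceil> = - (- (8 * int n) div 3)"
    using ceiling_divide_eq_div[of "8 * int n" 3] by simp
  also have "\<dots> = int ((8 * n + 2) div 3)"
    by presburger
  finally show ?thesis .
qed

theorem proposition4p12:
  fixes n :: nat
  assumes "n \<ge> 3"
  shows "gamma_trk (cart_verts (path_verts 3) (path_verts n))
                   (cart_arcs (path_verts 3) (path_arcs 3) (path_verts n) (path_arcs n)) 3
         = (if n mod 3 = 0 then nat \<lceil>8 * real n / 3\<rceil> + 1 else nat \<lceil>8 * real n / 3\<rceil>)"
proof -
  have "gamma_trk (grid_verts 3 n) (grid_arcs 3 n) 3 = (8 * n + 3) div 3"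
  proof (rule gamma_trk_eqI)
    show "total_rainbow_dom (grid_verts 3 n) (grid_arcs 3 n) 3 (construction n)"
      using assms by (rule construction_total_rainbow_dom)
    show "rd_weight (grid_verts 3 n) (construction n) = (8 * n + 3) div 3"
      using assms by (rule rd_weight_construction)
  next
    fix g
    assume "total_rainbow_dom (grid_verts 3 n) (grid_arcs 3 n) 3 g"
    then have "8 * n + 1 \<le> 3 * rd_weight (grid_verts 3 n) g"
      using assms by (intro rd_weight_grid_lower_bound) auto
    then show "(8 * n + 3) div 3 \<le> rd_weight (grid_verts 3 n) g"
      by presburger
  qed
  then show ?thesis
    unfolding ceiling_eight_thirds nat_int by presburger
qed

end
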